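(* Let $q\ge2$ be an integer. (1) Let $\alpha\in\mathbb{R}\setminus\mathbb{Q}$. For every $k\in\mathbb{N}$ and every intervals $I_0,\dots,I_{k-1}\subset[0,1)$ of positive length, there exist $n\in\mathbb{N}_0$ and $m\in\mathbb{N}$ such that $\alpha s_q(n+jm)\bmod 1\in I_j$ for all $0\le j<k$. (2) Let $Q\in\mathbb{N}$ be coprime to $q-1$. For every $k\in\mathbb{N}$ and every $r_0,\dots,r_{k-1}\in\{0,1,\dots,Q-1\}$ there exist $n\in\mathbb{N}_0$ and $m\in\mathbb{N}$ such that $s_q(n+jm)\equiv r_j\pmod Q$ for all $0\le j<k$. Moreover, in both (1) and (2), with all parameters other than $N$ fixed, the number of pairs $(n,m)$ such that the progression $n,n+m,\dots,n+(k-1)m$ is contained in $\{0,1,\dots,N-1\}$ and has the stated property is $\asymp N^2$ as $N\to\infty$ (i.e. bounded above and below by positive constant multiples of $N^2$ for all large $N$).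
   Context: $s_q(n)$ denotes the sum of the digits of $n$ in its base-$q$ expansion. $\mathbb{N}=\{1,2,\dots\}$, $\mathbb{N}_0=\mathbb{N}\cup\{0\}$. *)

theory Defs
  imports "HOL-Analysis.Analysis"
begin

function digit_sum :: "nat \<Rightarrow> nat \<Rightarrow> nat" where
  "digit_sum q n = (if q < 2 \<or> n = 0 then 0 else n mod q + digit_sum q (n div q))"
  by auto
termination by (relation "Wellfounded.measure snd") auto

declare digit_sum.simps [simp del]

end

theory Submission
  imports Defs "HOL-Number_Theory.Cong" "HOL-Analysis.Kronecker_Approximation_Theorem"
begin

(* Digits below q^L do not interact with digits above: s_q(x + q^L y) = s_q(x) + s_q(y) for
   x < q^L, so stacking one progression below q^L and another above it adds their digit-sum
   patterns. The block q^(k+u) - i, q^(k+u) - i + 1, ... borrows through u extra digits q - 1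
   exactly in its first i terms; stacking such blocks for i = 1..k realizes the pattern
   B_j + (q - 1) V_j for every nonincreasing V, with B_j independent of V. Choosing
   V_(k-1) <= ... <= V_0 one after another and each as large as needed, Kronecker's theorem
   (alpha (q - 1) is irrational) or the invertibility of q - 1 modulo Q hits any prescribed
   intervals or residues.
   For the count, among the ~ N^2 short progressions (a, b) with a < M <= b < 2M a positive
   proportion share the same class (vector of residues, or of cells of width 1/D containing
   frac (alpha s_q(a + jb))); putting above all of them one fixed progression that completes
   this class yields >> N^2 progressions in [0, N) with the property. The bound N^2 from above
   is trivial. *)

lemma less_power_self: "2 \<le> q \<Longrightarrow> n < (q::nat) ^ n"
  using less_exp[of n] power_mono[of 2 q n] by linarith

lemma digit_sum_0 [simp]: "digit_sum q 0 = 0"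
  by (simp add: digit_sum.simps)

lemma digit_sum_eq: "q \<ge> 2 \<Longrightarrow> digit_sum q n = n mod q + digit_sum q (n div q)"
  by (cases "n = 0") (simp_all add: digit_sum.simps[of q n])

lemma digit_sum_less: "q \<ge> 2 \<Longrightarrow> n < q \<Longrightarrow> digit_sum q n = n"
  using digit_sum_eq[of q n] by simp

lemma digit_sum_add_mult_power:
  assumes "q \<ge> 2" "x < q ^ L"
  shows "digit_sum q (x + q ^ L * y) = digit_sum q x + digit_sum q y"
  using assms(2)
proof (induction L arbitrary: x)
  case 0
  then show ?case by simp
next
  case (Suc L)
  have "(x + q ^ Suc L * y) mod q = x mod q" "(x + q ^ Suc L * y) div q = x div q + q ^ L * y"
    using assms(1) by (simp_all add: mult.assoc)
  moreover have "x div q < q ^ L"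
    using Suc.prems assms(1) by (simp add: div_less_iff_less_mult mult.commute)
  ultimately show ?case
    using Suc.IH digit_sum_eq[OF assms(1), of x] digit_sum_eq[OF assms(1), of "x + q ^ Suc L * y"]
    by simp
qed

lemma digit_sum_power_diff:
  assumes "q \<ge> 2" "1 \<le> t" "t \<le> q ^ k"
  shows "digit_sum q (q ^ (k + u) - t) = digit_sum q (q ^ k - t) + u * (q - 1)"
proof (induction u)
  case 0
  then show ?case by simp
next
  case (Suc u)
  have "q ^ k \<le> q ^ (k + u)"
    using assms(1) by (simp add: power_increasing)
  then have t_le: "t \<le> q ^ (k + u)"
    using assms(3) by linarith
  have "q ^ (k + Suc u) - t = (q ^ (k + u) - t) + q ^ (k + u) * (q - 1)"
    using t_le assms(1) by (cases q) (simp_all add: algebra_simps)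
  then have "digit_sum q (q ^ (k + Suc u) - t)
      = digit_sum q (q ^ (k + u) - t) + digit_sum q (q - 1)"
    using digit_sum_add_mult_power[OF assms(1), of "q ^ (k + u) - t"] assms(2) t_le by simp
  then show ?case
    using Suc.IH digit_sum_less[OF assms(1), of "q - 1"] assms(1) by (simp add: add_ac)
qed

lemma digit_sum_progression_concat:
  assumes "q \<ge> 2" "a + (k - 1) * b < q ^ L" "j < k"
  shows "digit_sum q ((a + q ^ L * n) + j * (b + q ^ L * m))
       = digit_sum q (a + j * b) + digit_sum q (n + j * m)"
proof -
  have "j * b \<le> (k - 1) * b"
    using assms(3) by (intro mult_le_mono1) simp
  then have "a + j * b < q ^ L"
    using assms(2) by linarith
  moreover have "(a + q ^ L * n) + j * (b + q ^ L * m) = (a + j * b) + q ^ L * (n + j * m)"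
    by (simp add: algebra_simps)
  ultimately show ?thesis
    using digit_sum_add_mult_power[OF assms(1)] by metis
qed

definition ap_digit_sums :: "nat \<Rightarrow> nat \<Rightarrow> (nat \<Rightarrow> nat) \<Rightarrow> bool" where
  "ap_digit_sums q k f \<longleftrightarrow> (\<exists>n m. \<forall>j<k. digit_sum q (n + j * m) = f j)"

lemma ap_digit_sums_zero: "ap_digit_sums q k (\<lambda>_. 0)"
  unfolding ap_digit_sums_def by (intro exI[of _ 0]) simp

lemma ap_digit_sums_add:
  assumes "q \<ge> 2" "ap_digit_sums q k f" "ap_digit_sums q k g"
  shows "ap_digit_sums q k (\<lambda>j. f j + g j)"
proof -
  obtain n1 m1 n2 m2 where f: "\<forall>j<k. digit_sum q (n1 + j * m1) = f j"
    and g: "\<forall>j<k. digit_sum q (n2 + j * m2) = g j"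
    using assms(2,3) unfolding ap_digit_sums_def by blast
  define L where "L = n1 + (k - 1) * m1"
  have "L < q ^ L"
    using less_power_self[OF assms(1)] .
  then have "\<forall>j<k. digit_sum q ((n1 + q ^ L * n2) + j * (m1 + q ^ L * m2)) = f j + g j"
    using digit_sum_progression_concat[OF assms(1)] f g unfolding L_def by simp
  then show ?thesis
    unfolding ap_digit_sums_def by blast
qed

lemma ap_digit_sums_sum:
  assumes "q \<ge> 2" "\<And>i. i \<in> I \<Longrightarrow> ap_digit_sums q k (f i)"
  shows "ap_digit_sums q k (\<lambda>j. \<Sum>i\<in>I. f i j)"
  using assms(2)
  by (induction I rule: infinite_finite_induct)
    (simp_all add: ap_digit_sums_zero ap_digit_sums_add[OF assms(1)])

lemma digit_sum_borrow_block:
  assumes "q \<ge> 2" "1 \<le> i" "i \<le> k" "j < k"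
  shows "digit_sum q (q ^ (k + u) - i + j)
    = digit_sum q (q ^ k - i + j) + (if j < i then u * (q - 1) else 0)"
proof -
  have k_less: "k < q ^ k" and pow_le: "q ^ k \<le> q ^ (k + u)"
    using less_power_self[OF assms(1)] assms(1) by (simp_all add: power_increasing)
  then have i_le: "i \<le> q ^ (k + u)"
    using assms(3) by linarith
  show ?thesis
  proof (cases "j < i")
    case True
    then have "q ^ (k + u) - i + j = q ^ (k + u) - (i - j)" "q ^ k - i + j = q ^ k - (i - j)"
      using assms(3) k_less i_le by simp_all
    then show ?thesis
      using digit_sum_power_diff[OF assms(1), of "i - j" k u] True assms k_less by simp
  next
    case False
    then have long: "q ^ (k + u) - i + j = (j - i) + q ^ (k + u) * 1"
      and short: "q ^ k - i + j = (j - i) + q ^ k * 1"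
      and small: "j - i < q ^ k" "j - i < q ^ (k + u)"
      using k_less pow_le i_le assms(4) by simp_all
    show ?thesis
      unfolding long short digit_sum_add_mult_power[OF assms(1) small(1)]
        digit_sum_add_mult_power[OF assms(1) small(2)]
      using False by simp
  qed
qed

lemma ap_digit_sums_borrow_block:
  assumes "q \<ge> 2" "1 \<le> i" "i \<le> k"
  shows "ap_digit_sums q k (\<lambda>j. digit_sum q (q ^ k - i + j) + (if j < i then u * (q - 1) else 0))"
  unfolding ap_digit_sums_def using digit_sum_borrow_block[OF assms]
  by (intro exI[of _ "q ^ (k + u) - i"] exI[of _ 1]) simp

definition borrow_base :: "nat \<Rightarrow> nat \<Rightarrow> nat \<Rightarrow> nat" where
  "borrow_base q k j = (\<Sum>i=1..k. digit_sum q (q ^ k - i + j))"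

lemma sum_antimono_diff_telescope:
  fixes V :: "nat \<Rightarrow> nat"
  assumes "antimono V" "j \<le> k"
  shows "(\<Sum>i=Suc j..k. V (i - 1) - V i) = V j - V k"
  using assms(2)
proof (induction k rule: dec_induct)
  case base
  then show ?case by simp
next
  case (step k)
  have "V (Suc k) \<le> V k" "V k \<le> V j"
    using antimonoD[OF assms(1)] step.hyps by simp_all
  then show ?case
    using step.IH step.hyps by simp
qed

text \<open>Concatenating the blocks \<open>q ^ (k + u\<^sub>i) - i\<close> (\<open>1 \<le> i \<le> k\<close>) with step \<open>1\<close>,
  where \<open>u\<^sub>i = V (i - 1) - V i\<close>, the \<open>j\<close>-th term collects \<open>u\<^sub>i\<close> exactly for \<open>i > j\<close>.\<close>
lemma ap_digit_sums_antimono: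
  assumes "q \<ge> 2" "antimono V" "V k = 0"
  shows "ap_digit_sums q k (\<lambda>j. borrow_base q k j + (q - 1) * V j)"
proof -
  define block where
    "block i j = digit_sum q (q ^ k - i + j) + (if j < i then (V (i - 1) - V i) * (q - 1) else 0)"
    for i j
  have sum_eq: "(\<Sum>i=1..k. block i j) = borrow_base q k j + (q - 1) * V j" if "j < k" for j
  proof -
    have "(\<Sum>i=1..k. if j < i then (V (i - 1) - V i) * (q - 1) else 0)
        = (\<Sum>i=Suc j..k. (V (i - 1) - V i) * (q - 1))"
      by (rule sum.mono_neutral_cong_right) (use that in auto)
    also have "\<dots> = (\<Sum>i=Suc j..k. V (i - 1) - V i) * (q - 1)"
      by (rule sum_distrib_right[symmetric])
    also have "\<dots> = V j * (q - 1)"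
      using sum_antimono_diff_telescope[OF assms(2), of j k] that assms(3) by simp
    finally show ?thesis
      unfolding block_def borrow_base_def sum.distrib by simp
  qed
  have "ap_digit_sums q k (\<lambda>j. \<Sum>i=1..k. block i j)"
    unfolding block_def
    by (rule ap_digit_sums_sum[OF assms(1)], rule ap_digit_sums_borrow_block) (use assms(1) in auto)
  then obtain n m where "\<forall>j<k. digit_sum q (n + j * m) = (\<Sum>i=1..k. block i j)"
    unfolding ap_digit_sums_def by blast
  then show ?thesis
    unfolding ap_digit_sums_def using sum_eq by auto
qed

lemma exists_antimono_choice:
  fixes P :: "nat \<Rightarrow> nat \<Rightarrow> bool"
  assumes "\<And>j N. j < k \<Longrightarrow> \<exists>v\<ge>N. P j v"
  shows "\<exists>V. antimono V \<and> V k = 0 \<and> (\<forall>j<k. P j (V j))"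
  using assms
proof (induction k arbitrary: P)
  case 0
  show ?case
    by (intro exI[of _ "\<lambda>_. 0"]) (simp add: antimono_def)
next
  case (Suc k)
  obtain V where V: "antimono V" "V k = 0" "\<forall>j<k. P (Suc j) (V j)"
    using Suc.IH[of "\<lambda>j. P (Suc j)"] Suc.prems by blast
  obtain v where v: "v \<ge> V 0" "P 0 v"
    using Suc.prems by blast
  have "antimono (case_nat v V)"
    unfolding antimono_iff_le_Suc using V(1) v(1) by (auto simp: antimonoD split: nat.split)
  moreover have "\<forall>j<Suc k. P j (case_nat v V j)"
    using V(3) v(2) by (auto simp: less_Suc_eq_0_disj)
  ultimately show ?case
    using V(2) by (intro exI[of _ "case_nat v V"]) simp
qed

lemma ap_digit_sums_exists:
  assumes "q \<ge> 2" "\<And>j N. j < k \<Longrightarrow> \<exists>v\<ge>N. R j (borrow_base q k j + (q - 1) * v)"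
  shows "\<exists>n m. \<forall>j<k. R j (digit_sum q (n + j * m))"
proof -
  obtain V where "antimono V" "V k = 0" and R: "\<forall>j<k. R j (borrow_base q k j + (q - 1) * V j)"
    using exists_antimono_choice[of k "\<lambda>j v. R j (borrow_base q k j + (q - 1) * v)"] assms(2)
    by blast
  then obtain n m where "\<forall>j<k. digit_sum q (n + j * m) = borrow_base q k j + (q - 1) * V j"
    using ap_digit_sums_antimono[OF assms(1)] unfolding ap_digit_sums_def by blast
  then show ?thesis
    using R by (intro exI[of _ n] exI[of _ m]) simp
qed

lemma frac_add_mult_dense:
  fixes \<beta> d lo hi :: real
  assumes "\<beta> \<notin> \<rat>" "0 \<le> lo" "lo < hi" "hi \<le> 1"
  shows "\<exists>n\<ge>N. frac (d + \<beta> * real n) \<in> {lo<..<hi}"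
proof -
  \<comment> \<open>Approximating with multiples of \<open>\<theta>\<close> makes \<open>n\<close> a positive multiple of \<open>N + 1\<close>.\<close>
  define \<theta> where "\<theta> = real (Suc N) * \<beta>"
  have irrational: "\<theta> \<notin> \<rat>"
    using assms(1) Rats_divide[of \<theta> "real (Suc N)"] by (auto simp: \<theta>_def)
  obtain h l where l: "l > 0"
    and close: "\<bar>of_int l * \<theta> - of_int h - ((lo + hi) / 2 - d)\<bar> < (hi - lo) / 2"
    using sequence_of_fractional_parts_is_dense[OF irrational, of "(hi - lo) / 2"] assms(3)
    by (metis diff_gt_0_iff_gt half_gt_zero)
  define n where "n = nat l * Suc N"
  define e where "e = d + \<beta> * real n - of_int h"
  have "\<beta> * real n = of_int l * \<theta>"
    using l by (simp add: n_def \<theta>_def algebra_simps)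
  then have "\<bar>e - (lo + hi) / 2\<bar> < (hi - lo) / 2"
    using close by (simp add: e_def algebra_simps)
  then have "lo < e" "e < hi"
    by (auto simp: abs_less_iff field_simps)
  then have "frac (d + \<beta> * real n) = e"
    using assms(2,4) by (subst frac_unique_iff) (auto simp: e_def)
  moreover have "1 * Suc N \<le> n"
    unfolding n_def using l by (intro mult_le_mono1) linarith
  then have "n \<ge> N"
    by simp
  ultimately show ?thesis
    using \<open>lo < e\<close> \<open>e < hi\<close> by auto
qed

lemma ap_frac_digit_sums_exists:
  assumes "q \<ge> 2" "\<alpha> \<notin> \<rat>" "\<And>j. j < k \<Longrightarrow> 0 \<le> lo j \<and> lo j < hi j \<and> hi j \<le> 1"
  shows "\<exists>n m. \<forall>j<k. frac (c j + \<alpha> * real (digit_sum q (n + j * m))) \<in> {lo j<..<hi j}"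
proof (rule ap_digit_sums_exists[OF assms(1)])
  fix j N assume "j < k"
  have "\<alpha> * real (q - 1) \<notin> \<rat>"
    using assms(1,2) Rats_divide[of "\<alpha> * real (q - 1)" "real (q - 1)"] by auto
  then obtain v where "v \<ge> N"
    and "frac ((c j + \<alpha> * real (borrow_base q k j)) + \<alpha> * real (q - 1) * real v) \<in> {lo j<..<hi j}"
    using frac_add_mult_dense assms(3)[OF \<open>j < k\<close>] by blast
  moreover have "c j + \<alpha> * real (borrow_base q k j + (q - 1) * v)
      = (c j + \<alpha> * real (borrow_base q k j)) + \<alpha> * real (q - 1) * real v"
    by (simp only: of_nat_add of_nat_mult distrib_left add.assoc mult.assoc)
  ultimately show "\<exists>v\<ge>N. frac (c j + \<alpha> * real (borrow_base q k j + (q - 1) * v)) \<in> {lo j<..<hi j}"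
    by metis
qed

lemma ap_mod_digit_sums_exists:
  assumes "q \<ge> 2" "Q \<ge> 1" "coprime Q (q - 1)"
  shows "\<exists>n m. \<forall>j<k. digit_sum q (n + j * m) mod Q = t j mod Q"
proof (rule ap_digit_sums_exists[OF assms(1)])
  fix j N
  obtain x where x: "[(q - 1) * x = 1] (mod Q)"
    using cong_solve_coprime_nat[of "q - 1" Q] assms(3) by (auto simp: coprime_commute)
  define B where "B = borrow_base q k j"
  \<comment> \<open>\<open>x\<close> inverts \<open>q - 1\<close> and \<open>(Q - 1) * B\<close> stands for \<open>- B\<close> modulo \<open>Q\<close>.\<close>
  define v where "v = x * (t j + (Q - 1) * B) + Q * N"
  have v_expand: "B + (q - 1) * v = (B + ((q - 1) * x) * (t j + (Q - 1) * B)) + Q * ((q - 1) * N)"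
    unfolding v_def by (simp only: distrib_left mult.assoc mult.left_commute add.assoc)
  have "(B + (q - 1) * v) mod Q = (B + ((q - 1) * x) * (t j + (Q - 1) * B)) mod Q"
    unfolding v_expand by (rule mod_mult_self2)
  also have "\<dots> = (B + 1 * (t j + (Q - 1) * B)) mod Q"
    using cong_add[OF cong_refl cong_mult[OF x cong_refl]] unfolding cong_def .
  also have "B + 1 * (t j + (Q - 1) * B) = t j + Q * B"
    using assms(2) by (cases Q) simp_all
  finally have "(B + (q - 1) * v) mod Q = t j mod Q"
    by simp
  moreover have "N \<le> Q * N"
    using assms(2) by simp
  then have "v \<ge> N"
    unfolding v_def by linarith
  ultimately show "\<exists>v\<ge>N. (borrow_base q k j + (q - 1) * v) mod Q = t j mod Q"
    unfolding B_def by blast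
qed

definition progressions_below :: "nat \<Rightarrow> nat \<Rightarrow> (nat \<Rightarrow> nat \<Rightarrow> bool) \<Rightarrow> (nat \<times> nat) set" where
  "progressions_below N k P = {(n, m). 1 \<le> m \<and> m < N \<and> n + (k - 1) * m < N \<and> P n m}"

lemma progressions_below_subset: "progressions_below N k P \<subseteq> {..<N} \<times> {..<N}"
  by (auto simp: progressions_below_def)

lemma finite_progressions_below [simp]: "finite (progressions_below N k P)"
  using progressions_below_subset by (rule finite_subset) simp

lemma card_progressions_below_le: "card (progressions_below N k P) \<le> N ^ 2"
  using card_mono[OF _ progressions_below_subset] by (simp add: power2_eq_square)

lemma card_progressions_below_mono:
  "(\<And>n m. P n m \<Longrightarrow> P' n m) \<Longrightarrow> card (progressions_below N k P) \<le> card (progressions_below N k P')"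
  by (rule card_mono[OF finite_progressions_below]) (auto simp: progressions_below_def)

lemma shifted_progression_bounds:
  fixes a b n\<^sub>1 m\<^sub>1 :: nat
  assumes k: "k \<ge> 1" and ab: "a < M" "M \<le> b" "b < 2 * M"
    and L: "2 * k * M \<le> q ^ L" and N: "q ^ L * (1 + k * K) \<le> N" and nm: "n\<^sub>1 \<le> K" "m\<^sub>1 \<le> K"
  shows "a + (k - 1) * b < q ^ L" "b + q ^ L * m\<^sub>1 < N"
    "a + q ^ L * n\<^sub>1 + (k - 1) * (b + q ^ L * m\<^sub>1) < N"
proof -
  have "(k - 1) * b \<le> (k - 1) * (2 * M)"
    using ab by (intro mult_le_mono2) simp
  moreover have "2 * k * M = 2 * M + (k - 1) * (2 * M)"
    using k by (cases k) (simp_all add: algebra_simps)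
  ultimately show low: "a + (k - 1) * b < q ^ L"
    using ab L by linarith
  have "n\<^sub>1 + (k - 1) * m\<^sub>1 \<le> K + (k - 1) * K" "K \<le> k * K"
    using nm k by (simp_all add: add_le_mono)
  moreover have "K + (k - 1) * K = k * K"
    using k by (cases k) simp_all
  ultimately have "q ^ L * (n\<^sub>1 + (k - 1) * m\<^sub>1) \<le> q ^ L * (k * K)" "q ^ L * m\<^sub>1 \<le> q ^ L * (k * K)"
    using nm by simp_all
  moreover have "q ^ L + q ^ L * (k * K) \<le> N"
    using N by (simp only: distrib_left mult_1_right)
  moreover have "a + q ^ L * n\<^sub>1 + (k - 1) * (b + q ^ L * m\<^sub>1)
      = (a + (k - 1) * b) + q ^ L * (n\<^sub>1 + (k - 1) * m\<^sub>1)"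
    by (simp add: algebra_simps)
  moreover have "2 * M \<le> 2 * k * M"
    using k by simp
  then have "b < q ^ L"
    using ab L by linarith
  ultimately show "b + q ^ L * m\<^sub>1 < N" "a + q ^ L * n\<^sub>1 + (k - 1) * (b + q ^ L * m\<^sub>1) < N"
    using low by linarith+
qed

lemma card_class_le_card_progressions_below:
  fixes cls :: "nat \<Rightarrow> nat \<Rightarrow> 'c"
  assumes q: "q \<ge> 2" and k: "k \<ge> 1" and L: "2 * k * M \<le> q ^ L" and N: "q ^ L * (1 + k * K) \<le> N"
    and nm: "n\<^sub>1 \<le> K" "m\<^sub>1 \<le> K"
    and complete: "\<And>j x. j < k \<Longrightarrow> cls j x = w j \<Longrightarrow> R j (x + digit_sum q (n\<^sub>1 + j * m\<^sub>1))"
  shows "card {(a, b) \<in> {..<M} \<times> {M..<2 * M}. \<forall>j<k. cls j (digit_sum q (a + j * b)) = w j}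
      \<le> card (progressions_below N k (\<lambda>n m. \<forall>j<k. R j (digit_sum q (n + j * m))))"
    (is "card ?S \<le> card ?G")
proof -
  define shift where "shift = (\<lambda>(a, b). (a + q ^ L * n\<^sub>1, b + q ^ L * m\<^sub>1))"
  have "shift ` ?S \<subseteq> ?G"
  proof
    fix y assume "y \<in> shift ` ?S"
    then obtain a b where ab: "a < M" "M \<le> b" "b < 2 * M"
      and cls: "\<forall>j<k. cls j (digit_sum q (a + j * b)) = w j"
      and y: "y = (a + q ^ L * n\<^sub>1, b + q ^ L * m\<^sub>1)"
      by (auto simp: shift_def)
    note bounds = shifted_progression_bounds[OF k ab L N nm]
    have "\<forall>j<k. R j (digit_sum q (a + q ^ L * n\<^sub>1 + j * (b + q ^ L * m\<^sub>1)))"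
      using complete cls digit_sum_progression_concat[OF q bounds(1)] by simp
    then show "y \<in> ?G"
      using y ab bounds(2,3) by (simp add: progressions_below_def)
  qed
  moreover have "inj_on shift ?S"
    by (auto simp: shift_def inj_on_def)
  ultimately show ?thesis
    by (intro card_inj_on_le) simp_all
qed

lemma card_progressions_below_ge_square:
  fixes cls :: "nat \<Rightarrow> nat \<Rightarrow> 'c"
  assumes q: "q \<ge> 2" and k: "k \<ge> 1" and C: "finite C" "\<And>j x. cls j x \<in> C"
    and complete: "\<And>w. w \<in> PiE {..<k} (\<lambda>_. C) \<Longrightarrow> \<exists>n m. n \<le> K \<and> m \<le> K \<and>
      (\<forall>j<k. \<forall>x. cls j x = w j \<longrightarrow> R j (x + digit_sum q (n + j * m)))"
    and M: "M \<ge> 1" and N: "2 * q * k * (1 + k * K) * M \<le> N"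
  shows "M * M \<le> card (progressions_below N k (\<lambda>n m. \<forall>j<k. R j (digit_sum q (n + j * m))))
      * card (PiE {..<k} (\<lambda>_. C))"
    (is "_ \<le> card ?G * card ?Pats")
proof -
  define pat where "pat = (\<lambda>(a, b). restrict (\<lambda>j. cls j (digit_sum q (a + j * b))) {..<k})"
  let ?S = "{..<M} \<times> {M..<2 * M}"
  have "pat \<in> ?S \<rightarrow> ?Pats"
    using C(2) by (simp add: pat_def Pi_iff split_beta restrict_PiE_iff)
  moreover have "finite ?Pats" "?Pats \<noteq> {}"
    using C by (auto simp: PiE_eq_empty_iff intro: finite_PiE)
  ultimately have "\<exists>w\<in>?Pats. card (pat -` {w} \<inter> ?S) * card ?Pats \<ge> card ?S"
    by (intro pigeonhole_card) simp_all
  then obtain w where w: "w \<in> ?Pats" and fiber: "card ?S \<le> card (pat -` {w} \<inter> ?S) * card ?Pats"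
    by blast
  have fiber_eq: "pat -` {w} \<inter> ?S = {(a, b) \<in> ?S. \<forall>j<k. cls j (digit_sum q (a + j * b)) = w j}"
    using w by (auto simp: pat_def PiE_iff extensional_def fun_eq_iff)
  obtain n\<^sub>1 m\<^sub>1 where nm: "n\<^sub>1 \<le> K" "m\<^sub>1 \<le> K"
    and completes: "\<forall>j<k. \<forall>x. cls j x = w j \<longrightarrow> R j (x + digit_sum q (n\<^sub>1 + j * m\<^sub>1))"
    using complete[OF w] by blast
  obtain L where L: "2 * k * M \<le> q ^ L" "q ^ L \<le> q * (2 * k * M)"
  proof -
    obtain L' where "q ^ L' \<le> 2 * k * M" "2 * k * M < q ^ (L' + 1)"
      using ex_power_ivl1[OF q, of "2 * k * M"] k M by auto
    then show thesis
      using that[of "L' + 1"] by simp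
  qed
  have "q ^ L * (1 + k * K) \<le> q * (2 * k * M) * (1 + k * K)"
    using L(2) by (rule mult_le_mono1)
  also have "\<dots> = 2 * q * k * (1 + k * K) * M"
    by (simp add: ac_simps)
  also note N
  finally have N_bound: "q ^ L * (1 + k * K) \<le> N" .
  have "card (pat -` {w} \<inter> ?S) \<le> card ?G"
    unfolding fiber_eq
    by (rule card_class_le_card_progressions_below[OF q k L(1) N_bound nm]) (use completes in blast)
  then have "card (pat -` {w} \<inter> ?S) * card ?Pats \<le> card ?G * card ?Pats"
    by (rule mult_le_mono1)
  moreover have "card ?S = M * M"
    by simp
  ultimately show ?thesis
    using fiber by linarith
qed

lemma square_le_mult_div_square:
  fixes N D :: nat
  assumes "D > 0" "D \<le> N"
  shows "N ^ 2 \<le> 4 * D ^ 2 * (N div D * (N div D))"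
proof -
  have "N = D * (N div D) + N mod D" "N mod D < D" "D \<le> D * (N div D)"
    using assms by (simp_all add: div_greater_zero_iff Suc_le_eq)
  then have "N \<le> 2 * D * (N div D)"
    by linarith
  then have "N ^ 2 \<le> (2 * D * (N div D)) ^ 2"
    by (rule power_mono) simp
  also have "\<dots> = 4 * D ^ 2 * (N div D * (N div D))"
    by (simp add: power2_eq_square algebra_simps)
  finally show ?thesis .
qed

lemma ex_inverse_of_nat_less:
  fixes k :: nat and \<delta> :: "nat \<Rightarrow> real"
  assumes "\<And>j. j < k \<Longrightarrow> 0 < \<delta> j"
  shows "\<exists>D>0. \<forall>j<k. 1 / real D < \<delta> j"
proof -
  have "\<forall>j\<in>{..<k}. \<forall>\<^sub>F D in sequentially. 1 / real D < \<delta> j"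
    using assms by (auto intro: order_tendstoD(2)[OF lim_inverse_n'])
  then have "\<forall>\<^sub>F D in sequentially. \<forall>j\<in>{..<k}. 1 / real D < \<delta> j"
    by (rule eventually_ball_finite[rotated]) simp
  then have "\<forall>\<^sub>F D in sequentially. D > 0 \<and> (\<forall>j\<in>{..<k}. 1 / real D < \<delta> j)"
    by (intro eventually_conj eventually_gt_at_top)
  then obtain D where "D > 0 \<and> (\<forall>j\<in>{..<k}. 1 / real D < \<delta> j)"
    using eventually_happens'[OF sequentially_bot] by blast
  then show ?thesis
    by auto
qed

lemma progressions_below_lower_bound:
  fixes cls :: "nat \<Rightarrow> nat \<Rightarrow> 'c"
  assumes q: "q \<ge> 2" and k: "k \<ge> 1" and C: "finite C" "\<And>j x. cls j x \<in> C"
    and complete: "\<And>w. \<exists>n m. \<forall>j<k. \<forall>x. cls j x = w j \<longrightarrow> R j (x + digit_sum q (n + j * m))"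
  shows "\<exists>c>0. \<forall>\<^sub>F N in sequentially. c * real N ^ 2
    \<le> real (card (progressions_below N k (\<lambda>n m. \<forall>j<k. R j (digit_sum q (n + j * m)))))"
proof -
  let ?G = "\<lambda>N. progressions_below N k (\<lambda>n m. \<forall>j<k. R j (digit_sum q (n + j * m)))"
  define Pats where "Pats = PiE {..<k} (\<lambda>_. C)"
  obtain nw mw where nmw: "\<And>w. \<forall>j<k. \<forall>x. cls j x = w j \<longrightarrow> R j (x + digit_sum q (nw w + j * mw w))"
    using complete by metis
  define K where "K = Max (nw ` Pats \<union> mw ` Pats)"
  define D where "D = 2 * q * k * (1 + k * K)"
  define c where "c = 1 / (4 * real D ^ 2 * real (card Pats))"
  have Pats: "finite Pats" "Pats \<noteq> {}"
    using C by (auto simp: Pats_def PiE_eq_empty_iff intro: finite_PiE)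
  have bounded: "\<exists>n m. n \<le> K \<and> m \<le> K \<and>
      (\<forall>j<k. \<forall>x. cls j x = w j \<longrightarrow> R j (x + digit_sum q (n + j * m)))"
    if "w \<in> PiE {..<k} (\<lambda>_. C)" for w
  proof -
    have "nw w \<le> K" "mw w \<le> K"
      using that Pats(1) by (auto simp: K_def Pats_def)
    then show ?thesis
      using nmw[of w] by blast
  qed
  have "D > 0"
    using q k by (simp add: D_def)
  have "c * real N ^ 2 \<le> real (card (?G N))" if "N \<ge> D" for N
  proof -
    define M where "M = N div D"
    have "M \<ge> 1"
      using that \<open>D > 0\<close> by (simp add: M_def div_greater_zero_iff Suc_le_eq)
    have "N ^ 2 \<le> 4 * D ^ 2 * (M * M)"
      unfolding M_def using \<open>D > 0\<close> that by (rule square_le_mult_div_square)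
    have "D * M \<le> N"
      by (simp add: M_def)
    then have "2 * q * k * (1 + k * K) * M \<le> N"
      by (simp add: D_def)
    from card_progressions_below_ge_square[OF q k C bounded \<open>M \<ge> 1\<close> this]
    have "4 * D ^ 2 * (M * M) \<le> 4 * D ^ 2 * (card (?G N) * card Pats)"
      unfolding Pats_def by (rule mult_le_mono2)
    with \<open>N ^ 2 \<le> 4 * D ^ 2 * (M * M)\<close> have "N ^ 2 \<le> 4 * D ^ 2 * (card (?G N) * card Pats)"
      by (rule order_trans)
    then have "real (N ^ 2) \<le> real (4 * D ^ 2 * (card (?G N) * card Pats))"
      by (rule of_nat_mono)
    then have bound: "real N ^ 2 \<le> (4 * real D ^ 2 * real (card Pats)) * real (card (?G N))"
      by (simp only: of_nat_mult of_nat_power of_nat_numeral mult_ac)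
    have "4 * real D ^ 2 * real (card Pats) > 0"
      using Pats \<open>D > 0\<close> by (simp add: card_gt_0_iff)
    then show ?thesis
      using bound by (simp add: c_def pos_divide_le_eq mult.commute)
  qed
  then have "\<forall>\<^sub>F N in sequentially. c * real N ^ 2 \<le> real (card (?G N))"
    by (rule eventually_sequentiallyI)
  moreover have "c > 0"
    using Pats \<open>D > 0\<close> by (simp add: c_def card_gt_0_iff)
  ultimately show ?thesis
    by blast
qed

lemma frac_add_mem_interval_floor:
  fixes x y A B D :: real
  assumes "D > 0" "0 \<le> A" "B \<le> 1" "frac (of_int \<lfloor>x * D\<rfloor> / D + y) \<in> {A<..<B - 1 / D}"
  shows "frac (x + y) \<in> {A<..<B}"
proof -
  define t where "t = x - of_int \<lfloor>x * D\<rfloor> / D"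
  define z where "z = frac (of_int \<lfloor>x * D\<rfloor> / D + y)"
  have floor: "of_int \<lfloor>x * D\<rfloor> \<le> x * D" "x * D < of_int \<lfloor>x * D\<rfloor> + 1"
    by linarith+
  have t_eq: "t = (x * D - of_int \<lfloor>x * D\<rfloor>) / D"
    using assms(1) by (simp add: t_def field_simps)
  have "x * D - of_int \<lfloor>x * D\<rfloor> < 1"
    using floor by linarith
  then have t: "0 \<le> t" "t < 1 / D"
    unfolding t_eq using assms(1) floor(1) divide_strict_right_mono by simp_all
  have "frac (x + y) = frac (t + z)"
    by (simp add: t_def z_def)
  also have "\<dots> = t + z"
    using t assms(2-4) by (subst frac_eq) (auto simp: z_def)
  finally show ?thesis
    using t assms(4) by (auto simp: z_def)
qed

lemma progressions_frac_digit_sums_lower_bound: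
  assumes q: "q \<ge> 2" and k: "k \<ge> 1" and \<alpha>: "\<alpha> \<notin> \<rat>"
    and AB: "\<And>j. j < k \<Longrightarrow> 0 \<le> A j \<and> A j < B j \<and> B j \<le> 1"
  shows "\<exists>c>0. \<forall>\<^sub>F N in sequentially. c * real N ^ 2 \<le> real (card (progressions_below N k
      (\<lambda>n m. \<forall>j<k. frac (\<alpha> * real (digit_sum q (n + j * m))) \<in> {A j<..<B j})))"
proof -
  obtain D where D: "D > 0" "\<And>j. j < k \<Longrightarrow> 1 / real D < B j - A j"
    using ex_inverse_of_nat_less[of k "\<lambda>j. B j - A j"] AB by auto
  show ?thesis
  proof (rule progressions_below_lower_bound[OF q k, where C = "{0..<int D}"
        and cls = "\<lambda>j x. \<lfloor>frac (\<alpha> * real x) * real D\<rfloor>"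
        and R = "\<lambda>j s. frac (\<alpha> * real s) \<in> {A j<..<B j}"])
    fix j x
    have "frac (\<alpha> * real x) * real D < real D"
      using D(1) by (simp add: frac_lt_1)
    then show "\<lfloor>frac (\<alpha> * real x) * real D\<rfloor> \<in> {0..<int D}"
      by (simp add: floor_less_iff)
  next
    fix w :: "nat \<Rightarrow> int"
    have "0 < 1 / real D"
      using D(1) by simp
    then have "0 \<le> A j \<and> A j < B j - 1 / real D \<and> B j - 1 / real D \<le> 1" if "j < k" for j
      using AB[OF that] D(2)[OF that] by (elim conjE) (intro conjI; linarith)
    from ap_frac_digit_sums_exists[where lo = A and hi = "\<lambda>j. B j - 1 / real D"
        and c = "\<lambda>j. of_int (w j) / real D", OF q \<alpha> this]
    obtain n m where nm: "\<forall>j<k. frac (of_int (w j) / real D + \<alpha> * real (digit_sum q (n + j * m)))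
        \<in> {A j<..<B j - 1 / real D}"
      by blast
    have "frac (\<alpha> * real (x + digit_sum q (n + j * m))) \<in> {A j<..<B j}"
      if "j < k" "\<lfloor>frac (\<alpha> * real x) * real D\<rfloor> = w j" for j x
    proof -
      have "frac (\<alpha> * real (x + digit_sum q (n + j * m)))
          = frac (frac (\<alpha> * real x) + \<alpha> * real (digit_sum q (n + j * m)))"
        by (simp add: distrib_left)
      also have "\<dots> \<in> {A j<..<B j}"
      proof (rule frac_add_mem_interval_floor[where D = "real D"])
        show "frac (of_int \<lfloor>frac (\<alpha> * real x) * real D\<rfloor> / real D
            + \<alpha> * real (digit_sum q (n + j * m))) \<in> {A j<..<B j - 1 / real D}"
          using nm that by simp
      qed (use D(1) AB[OF that(1)] in auto)
      finally show ?thesis .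
    qed
    then show "\<exists>n m. \<forall>j<k. \<forall>x. \<lfloor>frac (\<alpha> * real x) * real D\<rfloor> = w j \<longrightarrow>
        frac (\<alpha> * real (x + digit_sum q (n + j * m))) \<in> {A j<..<B j}"
      by blast
  qed simp
qed

lemma progressions_mod_digit_sums_lower_bound:
  assumes q: "q \<ge> 2" and k: "k \<ge> 1" and Q: "Q \<ge> 1" "coprime Q (q - 1)"
  shows "\<exists>c>0. \<forall>\<^sub>F N in sequentially. c * real N ^ 2 \<le> real (card (progressions_below N k
      (\<lambda>n m. \<forall>j<k. digit_sum q (n + j * m) mod Q = r j mod Q)))"
proof (rule progressions_below_lower_bound[OF q k, where C = "{..<Q}"
      and cls = "\<lambda>j x. x mod Q" and R = "\<lambda>j s. s mod Q = r j mod Q"])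
  fix w
  \<comment> \<open>\<open>(Q - 1) * w j\<close> stands for \<open>- w j\<close> modulo \<open>Q\<close>.\<close>
  from ap_mod_digit_sums_exists[where t = "\<lambda>j. r j + (Q - 1) * w j", OF q Q]
  obtain n m where nm: "\<forall>j<k. digit_sum q (n + j * m) mod Q = (r j + (Q - 1) * w j) mod Q"
    by blast
  have "(x + digit_sum q (n + j * m)) mod Q = r j mod Q" if "j < k" "x mod Q = w j" for j x
  proof -
    have "(x + digit_sum q (n + j * m)) mod Q = (x mod Q + digit_sum q (n + j * m) mod Q) mod Q"
      by (rule mod_add_eq[symmetric])
    also have "\<dots> = (w j + (r j + (Q - 1) * w j) mod Q) mod Q"
      using nm that by simp
    also have "\<dots> = (w j + (r j + (Q - 1) * w j)) mod Q"
      by (rule mod_add_right_eq)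
    also have "w j + (r j + (Q - 1) * w j) = r j + Q * w j"
      using Q(1) by (cases Q) simp_all
    finally show ?thesis
      by simp
  qed
  then show "\<exists>n m. \<forall>j<k. \<forall>x. x mod Q = w j \<longrightarrow> (x + digit_sum q (n + j * m)) mod Q = r j mod Q"
    by blast
qed (use Q in auto)

lemma progressions_below_lower_bound_mono:
  assumes "\<And>n m. P n m \<Longrightarrow> P' n m"
    and "\<exists>c>0. \<forall>\<^sub>F N in sequentially. c * real N ^ 2 \<le> real (card (progressions_below N k P))"
  shows "\<exists>c>0. \<forall>\<^sub>F N in sequentially. c * real N ^ 2 \<le> real (card (progressions_below N k P'))"
proof -
  obtain c where "c > 0"
    and lower: "\<forall>\<^sub>F N in sequentially. c * real N ^ 2 \<le> real (card (progressions_below N k P))"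
    using assms(2) by blast
  from lower have "\<forall>\<^sub>F N in sequentially. c * real N ^ 2 \<le> real (card (progressions_below N k P'))"
  proof eventually_elim
    case (elim N)
    then show ?case
      using of_nat_mono[OF card_progressions_below_mono[OF assms(1)]] by (rule order_trans)
  qed
  with \<open>c > 0\<close> show ?thesis
    by blast
qed

lemma progressions_interval_digit_sums_lower_bound:
  assumes q: "q \<ge> 2" and k: "k \<ge> 1" and \<alpha>: "\<alpha> \<notin> \<rat>"
    and I: "\<forall>j<k. I j \<subseteq> {0..<1} \<and> is_interval (I j) \<and> (\<exists>a b. a < b \<and> a \<in> I j \<and> b \<in> I j)"
  shows "\<exists>c>0. \<forall>\<^sub>F N in sequentially. c * real N ^ 2 \<le> real (card (progressions_below N k
      (\<lambda>n m. \<forall>j<k. frac (\<alpha> * real (digit_sum q (n + j * m))) \<in> I j)))"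
proof -
  have I': "I j \<subseteq> {0..<1}" "is_interval (I j)" and "\<exists>a b. a < b \<and> a \<in> I j \<and> b \<in> I j"
    if "j < k" for j
    using I that by blast+
  then obtain A B where AB: "\<And>j. j < k \<Longrightarrow> A j < B j \<and> A j \<in> I j \<and> B j \<in> I j"
    by metis
  have "0 \<le> A j \<and> A j < B j \<and> B j \<le> 1" if "j < k" for j
    using I'(1)[OF that] AB[OF that] by auto
  then have lower: "\<exists>c>0. \<forall>\<^sub>F N in sequentially. c * real N ^ 2 \<le> real (card (progressions_below N k
      (\<lambda>n m. \<forall>j<k. frac (\<alpha> * real (digit_sum q (n + j * m))) \<in> {A j<..<B j})))"
    by (rule progressions_frac_digit_sums_lower_bound[OF q k \<alpha>])
  have sub: "{A j<..<B j} \<subseteq> I j" if "j < k" for j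
  proof
    fix x assume "x \<in> {A j<..<B j}"
    then show "x \<in> I j"
      using I'(2)[OF that, unfolded is_interval_1] AB[OF that] by auto
  qed
  from lower show ?thesis
    by (rule progressions_below_lower_bound_mono[rotated]) (use sub in blast)
qed

lemma progressions_below_quadratic:
  assumes "\<exists>c>0. \<forall>\<^sub>F N in sequentially. c * real N ^ 2 \<le> real (card (progressions_below N k P))"
  shows "(\<exists>n m. m \<ge> 1 \<and> P n m)
    \<and> (\<exists>c C. c > 0 \<and> C > 0 \<and> (\<forall>\<^sub>F N in sequentially.
        c * real N ^ 2 \<le> real (card (progressions_below N k P)) \<and>
        real (card (progressions_below N k P)) \<le> C * real N ^ 2))"
proof -
  obtain c where "c > 0"
    and lower: "\<forall>\<^sub>F N in sequentially. c * real N ^ 2 \<le> real (card (progressions_below N k P))"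
    using assms by blast
  have bounds: "\<forall>\<^sub>F N in sequentially.
      c * real N ^ 2 \<le> real (card (progressions_below N k P)) \<and>
      real (card (progressions_below N k P)) \<le> 1 * real N ^ 2"
    using lower
  proof eventually_elim
    case (elim N)
    have "real (card (progressions_below N k P)) \<le> real (N ^ 2)"
      by (rule of_nat_mono[OF card_progressions_below_le])
    with elim show ?case
      by simp
  qed
  obtain N where "N > 0" "c * real N ^ 2 \<le> real (card (progressions_below N k P))"
    using eventually_happens'[OF sequentially_bot eventually_conj[OF eventually_gt_at_top lower]]
    by blast
  moreover have "c * real N ^ 2 > 0"
    using \<open>c > 0\<close> \<open>N > 0\<close> by simp
  ultimately have "progressions_below N k P \<noteq> {}"
    by auto
  then have "\<exists>n m. m \<ge> 1 \<and> P n m"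
    by (auto simp: progressions_below_def)
  with bounds \<open>c > 0\<close> show ?thesis
    using zero_less_one by blast
qed

theorem theoremD:
  fixes q :: nat
  assumes "q \<ge> 2"
  shows
   "(\<forall>(\<alpha>::real) (k::nat) (I::nat \<Rightarrow> real set).
       \<alpha> \<notin> \<rat> \<and> k \<ge> 1 \<and>
       (\<forall>j<k. I j \<subseteq> {0..<1} \<and> is_interval (I j) \<and>
              (\<exists>a b. a < b \<and> a \<in> I j \<and> b \<in> I j))
     \<longrightarrow>
       (\<exists>n m. m \<ge> 1 \<and> (\<forall>j<k. frac (\<alpha> * real (digit_sum q (n + j * m))) \<in> I j))
     \<and> (\<exists>c C. c > 0 \<and> C > 0 \<and>
          (\<forall>\<^sub>F N in sequentially.
             c * real N ^ 2 \<le> real (card {(n, m). 1 \<le> m \<and> m < N \<and> n + (k - 1) * m < N \<and>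
                  (\<forall>j<k. frac (\<alpha> * real (digit_sum q (n + j * m))) \<in> I j)}) \<and>
             real (card {(n, m). 1 \<le> m \<and> m < N \<and> n + (k - 1) * m < N \<and>
                  (\<forall>j<k. frac (\<alpha> * real (digit_sum q (n + j * m))) \<in> I j)}) \<le> C * real N ^ 2)))
  \<and>
   (\<forall>(Q::nat) (k::nat) (r::nat \<Rightarrow> nat).
       Q \<ge> 1 \<and> coprime Q (q - 1) \<and> k \<ge> 1 \<and> (\<forall>j<k. r j < Q)
     \<longrightarrow>
       (\<exists>n m. m \<ge> 1 \<and> (\<forall>j<k. digit_sum q (n + j * m) mod Q = r j mod Q))
     \<and> (\<exists>c C. c > 0 \<and> C > 0 \<and>
          (\<forall>\<^sub>F N in sequentially.
             c * real N ^ 2 \<le> real (card {(n, m). 1 \<le> m \<and> m < N \<and> n + (k - 1) * m < N \<and>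
                  (\<forall>j<k. digit_sum q (n + j * m) mod Q = r j mod Q)}) \<and>
             real (card {(n, m). 1 \<le> m \<and> m < N \<and> n + (k - 1) * m < N \<and>
                  (\<forall>j<k. digit_sum q (n + j * m) mod Q = r j mod Q)}) \<le> C * real N ^ 2)))"
  unfolding progressions_below_def[symmetric]
proof (rule conjI; intro allI impI; rule progressions_below_quadratic)
  fix \<alpha> :: real and k :: nat and I :: "nat \<Rightarrow> real set"
  assume "\<alpha> \<notin> \<rat> \<and> k \<ge> 1 \<and> (\<forall>j<k. I j \<subseteq> {0..<1} \<and> is_interval (I j) \<and>
    (\<exists>a b. a < b \<and> a \<in> I j \<and> b \<in> I j))"
  then show "\<exists>c>0. \<forall>\<^sub>F N in sequentially. c * real N ^ 2 \<le> real (card (progressions_below N k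
      (\<lambda>n m. \<forall>j<k. frac (\<alpha> * real (digit_sum q (n + j * m))) \<in> I j)))"
    by (intro progressions_interval_digit_sums_lower_bound[OF assms]) auto
next
  fix Q k :: nat and r :: "nat \<Rightarrow> nat"
  assume "Q \<ge> 1 \<and> coprime Q (q - 1) \<and> k \<ge> 1 \<and> (\<forall>j<k. r j < Q)"
  then show "\<exists>c>0. \<forall>\<^sub>F N in sequentially. c * real N ^ 2 \<le> real (card (progressions_below N k
      (\<lambda>n m. \<forall>j<k. digit_sum q (n + j * m) mod Q = r j mod Q)))"
    by (intro progressions_mod_digit_sums_lower_bound[OF assms]) auto
qed

end
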